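(* Assume $\mathbf E\mathbf E^\top$ and $\mathbf F^{(q)}\mathbf F^{(q)\top}$ ($1\le q\le Q$) are irreducible. Let $\bar{\mathbf S}=\mathbf J\boldsymbol\Sigma\mathbf J^\top$ be an eigenvalue decomposition with $\mathbf J\in\mathbb R^{K\times K}$ orthogonal and eigenvalues in decreasing order, let $\mathbf U=\boldsymbol\Theta_\theta\mathbf J=[\mathbf u_1,\dots,\mathbf u_K]$, and for any orthogonal $\mathbf O\in\mathbb R^{(K-1)\times(K-1)}$ and $c\in\{-1,1\}$ let $\mathbf R\in\mathbb R^{n\times(K-1)}$ have $i$-th row $\mathbf R_{\bar i}=([\mathbf u_2,\dots,\mathbf u_K]\mathbf O)_{\bar i}/(c\,\mathbf u_1(i))$. Then for all $1\le i_1,i_2\le n$: $\|\mathbf R_{\bar{i_1}}-\mathbf R_{\bar{i_2}}\|\ge2$ if $l_{i_1}\ne l_{i_2}$, and $\|\mathbf R_{\bar{i_1}}-\mathbf R_{\bar{i_2}}\|=0$ if $l_{i_1}=l_{i_2}$.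
   Context: Fix integers $K\ge2$, $K'\ge1$, $Q\ge1$. Primary nodes $\{1,\dots,n\}$ have labels $l_i\in\{1,\dots,K\}$, bipartite nodes $\{1,\dots,m\}$ have labels $r_j\in\{1,\dots,K'\}$, all communities nonempty. Parameters: $\boldsymbol\theta\in(0,1]^n$, $\boldsymbol\delta\in(0,1]^m$, symmetric $\mathbf E\in[0,1]^{K\times K}$, $\mathbf F^{(q)}\in[0,1]^{K\times K'}$. Define $\boldsymbol\theta^{(k)}_i=\theta_i\mathbb I(l_i=k)$, $\boldsymbol\delta^{(k')}_j=\delta_j\mathbb I(r_j=k')$, $\boldsymbol\Theta_\theta\in\mathbb R^{n\times K}$ with $\boldsymbol\Theta_\theta(i,k)=\theta_i\mathbb I(l_i=k)/\|\boldsymbol\theta^{(k)}\|$, $\boldsymbol\Psi_\theta=\mathrm{diag}(\|\boldsymbol\theta^{(k)}\|/\|\boldsymbol\theta\|)$, $\boldsymbol\Psi_\delta=\mathrm{diag}(\|\boldsymbol\delta^{(k')}\|/\|\boldsymbol\delta\|)$, $\mathbf S^{(0)}=\boldsymbol\Psi_\theta\mathbf E\boldsymbol\Psi_\theta$, $\mathbf S^{(q)}=\boldsymbol\Psi_\theta\mathbf F^{(q)}\boldsymbol\Psi_\delta$, $\bar{\mathbf S}=(\|\boldsymbol\theta\|^2/\|\boldsymbol\delta\|^2)\mathbf S^{(0)}\mathbf S^{(0)\top}+\sum_q\mathbf S^{(q)}\mathbf S^{(q)\top}$. Then $\mathbf U=\boldsymbol\Theta_\theta\mathbf J$ gives the $K$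 leading eigenvectors of the population aggregated matrix $\boldsymbol\Omega_M=\|\boldsymbol\theta\|^2\|\boldsymbol\delta\|^2\boldsymbol\Theta_\theta\bar{\mathbf S}\boldsymbol\Theta_\theta^\top$, and $\mathbf R$ is its ratio matrix. $\mathbf X_{\bar i}$ denotes the $i$-th row of a matrix $\mathbf X$; $\|\cdot\|$ is the Euclidean norm. *)

theory Defs
  imports Complex_Main
begin

text \<open>Matrices are represented as functions nat => nat => real, with 1-based
  indices; all dimensions are explicit.\<close>

text \<open>Irreducibility of a K x K matrix (standard definition: A is reducible iff,
  after a simultaneous permutation of rows and columns, it is block upper
  triangular, i.e. iff there is a nonempty proper index subset I with
  A i j = 0 for all i in I and j not in I).\<close>
definition irreducible_mat :: "nat \<Rightarrow> (nat \<Rightarrow> nat \<Rightarrow> real) \<Rightarrow> bool" where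
  "irreducible_mat K A \<longleftrightarrow>
     \<not> (\<exists>I. I \<subseteq> {1..K} \<and> I \<noteq> {} \<and> I \<noteq> {1..K} \<and>
            (\<forall>i\<in>I. \<forall>j\<in>{1..K} - I. A i j = 0))"

definition gram :: "nat \<Rightarrow> (nat \<Rightarrow> nat \<Rightarrow> real) \<Rightarrow> nat \<Rightarrow> nat \<Rightarrow> real" where
  "gram p A i j = (\<Sum>t\<in>{1..p}. A i t * A j t)"

definition orthogonal_mat :: "nat \<Rightarrow> (nat \<Rightarrow> nat \<Rightarrow> real) \<Rightarrow> bool" where
  "orthogonal_mat p A \<longleftrightarrow>
     (\<forall>i\<in>{1..p}. \<forall>j\<in>{1..p}. (\<Sum>t\<in>{1..p}. A t i * A t j) = (if i = j then 1 else 0))"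

definition comm_norm :: "nat \<Rightarrow> (nat \<Rightarrow> real) \<Rightarrow> (nat \<Rightarrow> nat) \<Rightarrow> nat \<Rightarrow> real" where
  "comm_norm n \<theta> l k = sqrt (\<Sum>i\<in>{1..n}. (if l i = k then \<theta> i else 0)^2)"

definition vnorm :: "nat \<Rightarrow> (nat \<Rightarrow> real) \<Rightarrow> real" where
  "vnorm n \<theta> = sqrt (\<Sum>i\<in>{1..n}. (\<theta> i)^2)"

definition Theta_mat :: "nat \<Rightarrow> (nat \<Rightarrow> real) \<Rightarrow> (nat \<Rightarrow> nat) \<Rightarrow> nat \<Rightarrow> nat \<Rightarrow> real" where
  "Theta_mat n \<theta> l i k = (if l i = k then \<theta> i else 0) / comm_norm n \<theta> l k"

text \<open>Diagonal entries of Psi_theta.\<close>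
definition Psi :: "nat \<Rightarrow> (nat \<Rightarrow> real) \<Rightarrow> (nat \<Rightarrow> nat) \<Rightarrow> nat \<Rightarrow> real" where
  "Psi n \<theta> l k = comm_norm n \<theta> l k / vnorm n \<theta>"

definition S0 :: "nat \<Rightarrow> (nat \<Rightarrow> real) \<Rightarrow> (nat \<Rightarrow> nat) \<Rightarrow> (nat \<Rightarrow> nat \<Rightarrow> real) \<Rightarrow> nat \<Rightarrow> nat \<Rightarrow> real" where
  "S0 n \<theta> l E k k' = Psi n \<theta> l k * E k k' * Psi n \<theta> l k'"

definition Sq :: "nat \<Rightarrow> (nat \<Rightarrow> real) \<Rightarrow> (nat \<Rightarrow> nat) \<Rightarrow> nat \<Rightarrow> (nat \<Rightarrow> real) \<Rightarrow> (nat \<Rightarrow> nat)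
                  \<Rightarrow> (nat \<Rightarrow> nat \<Rightarrow> real) \<Rightarrow> nat \<Rightarrow> nat \<Rightarrow> real" where
  "Sq n \<theta> l m \<delta> r Fq k k' = Psi n \<theta> l k * Fq k k' * Psi m \<delta> r k'"

definition Sbar :: "nat \<Rightarrow> nat \<Rightarrow> nat \<Rightarrow> nat \<Rightarrow> nat \<Rightarrow> (nat \<Rightarrow> real) \<Rightarrow> (nat \<Rightarrow> nat)
     \<Rightarrow> (nat \<Rightarrow> real) \<Rightarrow> (nat \<Rightarrow> nat) \<Rightarrow> (nat \<Rightarrow> nat \<Rightarrow> real) \<Rightarrow> (nat \<Rightarrow> nat \<Rightarrow> nat \<Rightarrow> real)
     \<Rightarrow> nat \<Rightarrow> nat \<Rightarrow> real" where
  "Sbar K K' Q n m \<theta> l \<delta> r E F k k'' =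
     (vnorm n \<theta>)^2 / (vnorm m \<delta>)^2 * gram K (S0 n \<theta> l E) k k''
     + (\<Sum>q\<in>{1..Q}. gram K' (Sq n \<theta> l m \<delta> r (F q)) k k'')"

end

theory Submission
  imports Defs "Jordan_Normal_Form.Determinant"
begin

text \<open>Since \<open>\<Theta>\<^sub>\<theta>\<close> has a single nonzero entry per row, row \<open>i\<close> of
  \<open>U = \<Theta>\<^sub>\<theta> J\<close> is a nonzero multiple of row \<open>l i\<close> of \<open>J\<close>. Hence row \<open>i\<close> of
  \<open>R\<close> depends only on the community \<open>k = l i\<close>: it is \<open>(J(k,2..K) O) / (c J(k,1))\<close>.
  These denominators are nonzero by Perron--Frobenius: \<open>S-bar\<close> is entrywise nonnegative
  and irreducible, so the entrywise absolute value of its leading eigenvector \<open>J(-,1)\<close>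
  again attains the top Rayleigh quotient, hence is a nonnegative eigenvector, and such an
  eigenvector of an irreducible matrix has no zero entries. Orthonormality of the rows of
  \<open>J\<close> and \<open>O\<close> gives \<open>\<parallel>R(k) - R(k')\<parallel>\<^sup>2 = 1/J(k,1)\<^sup>2 + 1/J(k',1)\<^sup>2\<close>, which is
  at least 4 because \<open>J(k,1)\<^sup>2 + J(k',1)\<^sup>2 \<le> 1\<close>.\<close>

hide_const (open) Matrix.orthogonal_mat

lemma sum_atLeast1_atMost_split_first:
  fixes K :: nat and f :: "nat \<Rightarrow> 'a::comm_monoid_add"
  assumes "1 \<le> K"
  shows "(\<Sum>t\<in>{1..K}. f t) = f 1 + (\<Sum>t\<in>{1..K-1}. f (t + 1))"
proof -
  have "{1+1..(K-1)+1} = {Suc 1..K}"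
    using assms by simp
  then have "(\<Sum>t\<in>{1..K}. f t) = f 1 + (\<Sum>t\<in>{1+1..(K-1)+1}. f t)"
    using assms by (simp add: sum.atLeast_Suc_atMost)
  also have "(\<Sum>t\<in>{1+1..(K-1)+1}. f t) = (\<Sum>t\<in>{1..K-1}. f (t + 1))"
    by (rule sum.shift_bounds_cl_nat_ivl)
  finally show ?thesis .
qed

lemma orthogonal_mat_rows:
  assumes "orthogonal_mat p A" "i \<in> {1..p}" "j \<in> {1..p}"
  shows "(\<Sum>t\<in>{1..p}. A i t * A j t) = (if i = j then 1 else 0)"
proof -
  define M where "M = mat p p (\<lambda>(i, j). A (i + 1) (j + 1))"
  have M: "M \<in> carrier_mat p p" by (simp add: M_def)
  have "transpose_mat M * M = 1\<^sub>m p"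
  proof (rule eq_matI)
    fix a b assume ab: "a < dim_row (1\<^sub>m p)" "b < dim_col (1\<^sub>m p)"
    have "(transpose_mat M * M) $$ (a, b) = (\<Sum>t\<in>{1..p}. A t (a + 1) * A t (b + 1))"
      using ab by (simp add: M_def scalar_prod_def atLeast0LessThan sum.atLeast1_atMost_eq)
    also have "\<dots> = 1\<^sub>m p $$ (a, b)"
      using assms(1) ab unfolding Defs.orthogonal_mat_def by auto
    finally show "(transpose_mat M * M) $$ (a, b) = 1\<^sub>m p $$ (a, b)" .
  qed (auto simp: M_def)
  then have right_inverse: "M * transpose_mat M = 1\<^sub>m p"
    using mat_mult_left_right_inverse[of "transpose_mat M" p M] M by auto
  have idx: "i - 1 < p" "j - 1 < p"
    using assms(2,3) by auto
  have "(\<Sum>t\<in>{1..p}. A i t * A j t) = (M * transpose_mat M) $$ (i - 1, j - 1)"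
    using assms(2,3) idx by (simp add: M_def scalar_prod_def atLeast0LessThan sum.atLeast1_atMost_eq)
  also have "\<dots> = (if i = j then 1 else 0)"
    using right_inverse idx assms(2,3) by auto
  finally show ?thesis .
qed

lemma orthogonal_mat_sum_squares:
  assumes "orthogonal_mat p A"
  shows "(\<Sum>j\<in>{1..p}. (\<Sum>t\<in>{1..p}. x t * A t j)\<^sup>2) = (\<Sum>t\<in>{1..p}. (x t)\<^sup>2)"
proof -
  have "(\<Sum>j\<in>{1..p}. (\<Sum>t\<in>{1..p}. x t * A t j)\<^sup>2)
      = (\<Sum>j\<in>{1..p}. \<Sum>t\<in>{1..p}. \<Sum>s\<in>{1..p}. x t * x s * (A t j * A s j))"
    by (simp add: power2_eq_square sum_product mult_ac)
  also have "\<dots> = (\<Sum>t\<in>{1..p}. \<Sum>s\<in>{1..p}. \<Sum>j\<in>{1..p}. x t * x s * (A t j * A s j))"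
    by (subst sum.swap) (rule sum.cong[OF refl], rule sum.swap)
  also have "\<dots> = (\<Sum>t\<in>{1..p}. \<Sum>s\<in>{1..p}. x t * x s * (\<Sum>j\<in>{1..p}. A t j * A s j))"
    by (simp add: sum_distrib_left)
  also have "\<dots> = (\<Sum>t\<in>{1..p}. \<Sum>s\<in>{1..p}. if t = s then (x t)\<^sup>2 else 0)"
    using orthogonal_mat_rows[OF assms]
    by (intro sum.cong refl) (simp add: power2_eq_square)
  also have "\<dots> = (\<Sum>t\<in>{1..p}. (x t)\<^sup>2)"
    by simp
  finally show ?thesis .
qed

lemma orthogonal_mat_inverse:
  assumes "orthogonal_mat p A" "i \<in> {1..p}"
  shows "(\<Sum>t\<in>{1..p}. A i t * (\<Sum>j\<in>{1..p}. A j t * y j)) = y i"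
proof -
  have "(\<Sum>t\<in>{1..p}. A i t * (\<Sum>j\<in>{1..p}. A j t * y j))
      = (\<Sum>j\<in>{1..p}. (\<Sum>t\<in>{1..p}. A i t * A j t) * y j)"
    unfolding sum_distrib_left sum_distrib_right
    by (subst sum.swap) (simp add: mult_ac)
  also have "\<dots> = (\<Sum>j\<in>{1..p}. if i = j then y j else 0)"
    using orthogonal_mat_rows[OF assms(1,2)] by (intro sum.cong refl) auto
  also have "\<dots> = y i"
    using assms(2) by simp
  finally show ?thesis .
qed


lemma spectral_mult_vec:
  fixes S J :: "nat \<Rightarrow> nat \<Rightarrow> real" and \<sigma> x :: "nat \<Rightarrow> real"
  assumes spec: "\<forall>k\<in>{1..K}. \<forall>k'\<in>{1..K}. S k k' = (\<Sum>t\<in>{1..K}. J k t * \<sigma> t * J k' t)"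
    and i: "i \<in> {1..K}"
  shows "(\<Sum>j\<in>{1..K}. S i j * x j) = (\<Sum>t\<in>{1..K}. J i t * \<sigma> t * (\<Sum>j\<in>{1..K}. J j t * x j))"
proof -
  have "(\<Sum>j\<in>{1..K}. S i j * x j) = (\<Sum>j\<in>{1..K}. \<Sum>t\<in>{1..K}. J i t * \<sigma> t * (J j t * x j))"
    using spec i by (intro sum.cong refl) (simp add: sum_distrib_right mult.assoc)
  also have "\<dots> = (\<Sum>t\<in>{1..K}. J i t * \<sigma> t * (\<Sum>j\<in>{1..K}. J j t * x j))"
    by (subst sum.swap) (simp add: sum_distrib_left)
  finally show ?thesis .
qed

lemma spectral_quad_form:
  fixes S J :: "nat \<Rightarrow> nat \<Rightarrow> real" and \<sigma> x :: "nat \<Rightarrow> real"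
  assumes spec: "\<forall>k\<in>{1..K}. \<forall>k'\<in>{1..K}. S k k' = (\<Sum>t\<in>{1..K}. J k t * \<sigma> t * J k' t)"
  shows "(\<Sum>i\<in>{1..K}. \<Sum>j\<in>{1..K}. S i j * x i * x j)
       = (\<Sum>t\<in>{1..K}. \<sigma> t * (\<Sum>i\<in>{1..K}. J i t * x i)\<^sup>2)"
proof -
  define w where "w t = (\<Sum>j\<in>{1..K}. J j t * x j)" for t
  have "(\<Sum>i\<in>{1..K}. \<Sum>j\<in>{1..K}. S i j * x i * x j) = (\<Sum>i\<in>{1..K}. x i * (\<Sum>j\<in>{1..K}. S i j * x j))"
    by (simp add: sum_distrib_left mult.assoc mult.left_commute)
  also have "\<dots> = (\<Sum>i\<in>{1..K}. x i * (\<Sum>t\<in>{1..K}. J i t * \<sigma> t * w t))"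
    by (intro sum.cong refl) (simp only: spectral_mult_vec[OF spec] w_def)
  also have "\<dots> = (\<Sum>i\<in>{1..K}. \<Sum>t\<in>{1..K}. (J i t * x i) * (\<sigma> t * w t))"
    by (simp add: sum_distrib_left mult.assoc mult.left_commute)
  also have "\<dots> = (\<Sum>t\<in>{1..K}. w t * (\<sigma> t * w t))"
    by (subst sum.swap) (simp add: w_def sum_distrib_right)
  also have "\<dots> = (\<Sum>t\<in>{1..K}. \<sigma> t * (\<Sum>i\<in>{1..K}. J i t * x i)\<^sup>2)"
    by (simp add: w_def power2_eq_square mult.left_commute)
  finally show ?thesis .
qed

lemma spectral_eigenvector_of_max_quad_form:
  fixes S J :: "nat \<Rightarrow> nat \<Rightarrow> real" and \<sigma> x :: "nat \<Rightarrow> real"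
  assumes orth: "orthogonal_mat K J"
    and spec: "\<forall>k\<in>{1..K}. \<forall>k'\<in>{1..K}. S k k' = (\<Sum>t\<in>{1..K}. J k t * \<sigma> t * J k' t)"
    and top: "\<forall>t\<in>{1..K}. \<sigma> t \<le> \<sigma> 1"
    and unit: "(\<Sum>i\<in>{1..K}. (x i)\<^sup>2) = 1"
    and max: "\<sigma> 1 \<le> (\<Sum>i\<in>{1..K}. \<Sum>j\<in>{1..K}. S i j * x i * x j)"
    and i: "i \<in> {1..K}"
  shows "(\<Sum>j\<in>{1..K}. S i j * x j) = \<sigma> 1 * x i"
proof -
  define w where "w t = (\<Sum>j\<in>{1..K}. J j t * x j)" for t
  have w_unit: "(\<Sum>t\<in>{1..K}. (w t)\<^sup>2) = 1"
    using orthogonal_mat_sum_squares[OF orth, of x] unit by (simp add: w_def mult_ac)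
  have gap_nonneg: "\<forall>t\<in>{1..K}. 0 \<le> (\<sigma> 1 - \<sigma> t) * (w t)\<^sup>2"
    using top by simp
  have "(\<Sum>t\<in>{1..K}. (\<sigma> 1 - \<sigma> t) * (w t)\<^sup>2) = \<sigma> 1 - (\<Sum>t\<in>{1..K}. \<sigma> t * (w t)\<^sup>2)"
    using w_unit by (simp add: left_diff_distrib sum_subtractf flip: sum_distrib_left)
  also have "\<dots> \<le> 0"
    using max spectral_quad_form[OF spec, of x] by (simp add: w_def)
  finally have "(\<Sum>t\<in>{1..K}. (\<sigma> 1 - \<sigma> t) * (w t)\<^sup>2) = 0"
    using gap_nonneg by (meson antisym sum_nonneg)
  then have "\<forall>t\<in>{1..K}. \<sigma> 1 = \<sigma> t \<or> w t = 0"
    using gap_nonneg sum_nonneg_eq_0_iff[of "{1..K}" "\<lambda>t. (\<sigma> 1 - \<sigma> t) * (w t)\<^sup>2"] by simp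
  then have \<sigma>_w: "\<sigma> t * w t = \<sigma> 1 * w t" if "t \<in> {1..K}" for t
    using that by (metis mult_zero_right)
  have "(\<Sum>j\<in>{1..K}. S i j * x j) = (\<Sum>t\<in>{1..K}. J i t * (\<sigma> t * w t))"
    using spectral_mult_vec[OF spec i] by (simp add: w_def mult_ac)
  also have "\<dots> = (\<Sum>t\<in>{1..K}. J i t * (\<sigma> 1 * w t))"
    by (intro sum.cong refl) (simp only: \<sigma>_w)
  also have "\<dots> = \<sigma> 1 * (\<Sum>t\<in>{1..K}. J i t * w t)"
    by (simp add: sum_distrib_left mult.left_commute)
  also have "\<dots> = \<sigma> 1 * x i"
    using orthogonal_mat_inverse[OF orth i] by (simp add: w_def)
  finally show ?thesis .
qed

lemma nonneg_irreducible_eigenvector_nonzero: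
  fixes S :: "nat \<Rightarrow> nat \<Rightarrow> real" and y :: "nat \<Rightarrow> real"
  assumes irr: "irreducible_mat K S"
    and S_nonneg: "\<forall>i\<in>{1..K}. \<forall>j\<in>{1..K}. 0 \<le> S i j"
    and y_nonneg: "\<forall>i\<in>{1..K}. 0 \<le> y i"
    and y_nonzero: "\<exists>i\<in>{1..K}. y i \<noteq> 0"
    and eigen: "\<forall>i\<in>{1..K}. (\<Sum>j\<in>{1..K}. S i j * y j) = \<mu> * y i"
    and k: "k \<in> {1..K}"
  shows "y k \<noteq> 0"
proof
  assume "y k = 0"
  define I where "I = {i\<in>{1..K}. y i = 0}"
  have "\<forall>i\<in>I. \<forall>j\<in>{1..K} - I. S i j = 0"
  proof (intro ballI)
    fix i j assume i: "i \<in> I" and j: "j \<in> {1..K} - I"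
    have "\<forall>j\<in>{1..K}. S i j * y j = 0"
      using eigen S_nonneg y_nonneg i unfolding I_def
      by (subst sum_nonneg_eq_0_iff[symmetric]) auto
    then show "S i j = 0"
      using j unfolding I_def by auto
  qed
  moreover have "I \<subseteq> {1..K}" "I \<noteq> {}" "I \<noteq> {1..K}"
    using k \<open>y k = 0\<close> y_nonzero unfolding I_def by auto
  ultimately show False
    using irr unfolding irreducible_mat_def by blast
qed

lemma spectral_first_column_nonzero:
  fixes S J :: "nat \<Rightarrow> nat \<Rightarrow> real" and \<sigma> :: "nat \<Rightarrow> real"
  assumes K: "1 \<le> K" and orth: "orthogonal_mat K J"
    and spec: "\<forall>k\<in>{1..K}. \<forall>k'\<in>{1..K}. S k k' = (\<Sum>t\<in>{1..K}. J k t * \<sigma> t * J k' t)"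
    and S_nonneg: "\<forall>i\<in>{1..K}. \<forall>j\<in>{1..K}. 0 \<le> S i j"
    and irr: "irreducible_mat K S"
    and top: "\<forall>t\<in>{1..K}. \<sigma> t \<le> \<sigma> 1"
    and k: "k \<in> {1..K}"
  shows "J k 1 \<noteq> 0"
proof -
  define y where "y i = \<bar>J i 1\<bar>" for i
  have col: "(\<Sum>i\<in>{1..K}. J i t * J i 1) = (if t = 1 then 1 else 0)" if "t \<in> {1..K}" for t
    using orth that K unfolding Defs.orthogonal_mat_def by auto
  have y_unit: "(\<Sum>i\<in>{1..K}. (y i)\<^sup>2) = 1"
    using col[of 1] K by (simp add: y_def power2_eq_square)
  have "\<sigma> 1 = (\<Sum>t\<in>{1..K}. if t = 1 then \<sigma> t else 0)"
    using K by simp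
  also have "\<dots> = (\<Sum>i\<in>{1..K}. \<Sum>j\<in>{1..K}. S i j * J i 1 * J j 1)"
    unfolding spectral_quad_form[OF spec] by (intro sum.cong refl) (use col in auto)
  also have "\<dots> \<le> (\<Sum>i\<in>{1..K}. \<Sum>j\<in>{1..K}. S i j * y i * y j)"
    using S_nonneg unfolding y_def
    by (intro sum_mono) (simp add: mult.assoc mult_left_mono flip: abs_mult)
  finally have eigen: "\<forall>i\<in>{1..K}. (\<Sum>j\<in>{1..K}. S i j * y j) = \<sigma> 1 * y i"
    using spectral_eigenvector_of_max_quad_form[OF orth spec top y_unit] by blast
  have y_nonneg: "\<forall>i\<in>{1..K}. 0 \<le> y i"
    by (simp add: y_def)
  have y_nonzero: "\<exists>i\<in>{1..K}. y i \<noteq> 0"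
    using y_unit by (metis (no_types, lifting) power_zero_numeral sum.neutral zero_neq_one)
  show ?thesis
    using nonneg_irreducible_eigenvector_nonzero[OF irr S_nonneg y_nonneg y_nonzero eigen k]
    by (simp add: y_def)
qed

definition ratio_row :: "nat \<Rightarrow> (nat \<Rightarrow> nat \<Rightarrow> real) \<Rightarrow> (nat \<Rightarrow> nat \<Rightarrow> real) \<Rightarrow> real \<Rightarrow> nat \<Rightarrow> nat \<Rightarrow> real"
  where "ratio_row K J Om c k j = (\<Sum>t\<in>{1..K-1}. J k (t + 1) * Om t j) / (c * J k 1)"

lemma ratio_row_scale:
  assumes "g \<noteq> 0"
  shows "(\<Sum>t\<in>{1..K-1}. g * J k (t + 1) * Om t j) / (c * (g * J k 1)) = ratio_row K J Om c k j"
  using assms by (simp add: ratio_row_def mult.assoc flip: sum_distrib_left)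

lemma ratio_row_dist_sq:
  assumes K: "1 \<le> K" and J: "orthogonal_mat K J" and Om: "orthogonal_mat (K - 1) Om"
    and k: "k \<in> {1..K}" "k' \<in> {1..K}" "k \<noteq> k'"
    and nz: "J k 1 \<noteq> 0" "J k' 1 \<noteq> 0" and c: "c\<^sup>2 = 1"
  shows "(\<Sum>j\<in>{1..K-1}. (ratio_row K J Om c k j - ratio_row K J Om c k' j)\<^sup>2)
       = 1 / (J k 1)\<^sup>2 + 1 / (J k' 1)\<^sup>2"
proof -
  define a where "a = J k 1"
  define b where "b = J k' 1"
  define u where "u t = J k (t + 1)" for t
  define v where "v t = J k' (t + 1)" for t
  have nz': "a \<noteq> 0" "b \<noteq> 0" "c \<noteq> 0"
    using nz c by (auto simp: a_def b_def)
  have "(\<Sum>j\<in>{1..K-1}. (ratio_row K J Om c k j - ratio_row K J Om c k' j)\<^sup>2)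
      = (\<Sum>j\<in>{1..K-1}. (\<Sum>t\<in>{1..K-1}. (u t / (c * a) - v t / (c * b)) * Om t j)\<^sup>2)"
    by (simp add: ratio_row_def u_def v_def a_def b_def sum_divide_distrib left_diff_distrib sum_subtractf)
  also have "\<dots> = (\<Sum>t\<in>{1..K-1}. (u t / (c * a) - v t / (c * b))\<^sup>2)"
    by (rule orthogonal_mat_sum_squares[OF Om])
  also have "\<dots> = (\<Sum>t\<in>{1..K-1}. (u t)\<^sup>2 / a\<^sup>2 + (v t)\<^sup>2 / b\<^sup>2 - 2 * (u t * v t) / (a * b))"
    using c nz' by (intro sum.cong refl) (simp add: power2_diff field_simps power2_eq_square)
  also have "\<dots> = (\<Sum>t\<in>{1..K-1}. (u t)\<^sup>2) / a\<^sup>2 + (\<Sum>t\<in>{1..K-1}. (v t)\<^sup>2) / b\<^sup>2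
       - 2 * (\<Sum>t\<in>{1..K-1}. u t * v t) / (a * b)"
    by (simp add: sum.distrib sum_subtractf sum_divide_distrib sum_distrib_left)
  also have "(\<Sum>t\<in>{1..K-1}. (u t)\<^sup>2) = 1 - a\<^sup>2"
    using orthogonal_mat_rows[OF J k(1) k(1)] sum_atLeast1_atMost_split_first[OF K, of "\<lambda>t. J k t * J k t"]
    by (simp add: u_def v_def a_def b_def power2_eq_square)
  also have "(\<Sum>t\<in>{1..K-1}. (v t)\<^sup>2) = 1 - b\<^sup>2"
    using orthogonal_mat_rows[OF J k(2) k(2)] sum_atLeast1_atMost_split_first[OF K, of "\<lambda>t. J k' t * J k' t"]
    by (simp add: u_def v_def a_def b_def power2_eq_square)
  also have "(\<Sum>t\<in>{1..K-1}. u t * v t) = - (a * b)"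
    using orthogonal_mat_rows[OF J k(1) k(2)] sum_atLeast1_atMost_split_first[OF K, of "\<lambda>t. J k t * J k' t"] k(3)
    by (simp add: u_def v_def a_def b_def)
  also have "(1 - a\<^sup>2) / a\<^sup>2 + (1 - b\<^sup>2) / b\<^sup>2 - 2 * (- (a * b)) / (a * b) = 1 / a\<^sup>2 + 1 / b\<^sup>2"
    using nz' by (simp add: field_simps)
  finally show ?thesis
    by (simp add: a_def b_def)
qed

lemma four_le_inverse_sq_add:
  fixes a b :: real
  assumes "a \<noteq> 0" "b \<noteq> 0" "a\<^sup>2 + b\<^sup>2 \<le> 1"
  shows "4 \<le> 1 / a\<^sup>2 + 1 / b\<^sup>2"
proof -
  define A where "A = a\<^sup>2"
  define B where "B = b\<^sup>2"
  have pos: "0 < A" "0 < B" "A + B \<le> 1"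
    using assms by (auto simp: A_def B_def)
  have "4 * A * B \<le> (A + B)\<^sup>2"
    using zero_le_power2[of "A - B"] by (simp add: power2_eq_square algebra_simps)
  also have "\<dots> \<le> A + B"
    using pos by (simp add: power2_eq_square mult_left_le)
  finally have "4 \<le> (A + B) / (A * B)"
    using pos by (simp add: field_simps)
  also have "\<dots> = 1 / A + 1 / B"
    using pos by (simp add: field_simps)
  finally show ?thesis
    by (simp add: A_def B_def)
qed

lemma ratio_row_dist_ge_two:
  assumes K: "1 \<le> K" and J: "orthogonal_mat K J" and Om: "orthogonal_mat (K - 1) Om"
    and k: "k \<in> {1..K}" "k' \<in> {1..K}" "k \<noteq> k'"
    and nz: "J k 1 \<noteq> 0" "J k' 1 \<noteq> 0" and c: "c\<^sup>2 = 1"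
  shows "2 \<le> sqrt (\<Sum>j\<in>{1..K-1}. (ratio_row K J Om c k j - ratio_row K J Om c k' j)\<^sup>2)"
proof -
  have "(\<Sum>t\<in>{k, k'}. (J t 1)\<^sup>2) \<le> (\<Sum>t\<in>{1..K}. (J t 1)\<^sup>2)"
    using k by (intro sum_mono2) auto
  also have "\<dots> = 1"
    using J K unfolding Defs.orthogonal_mat_def by (simp add: power2_eq_square)
  finally have "4 \<le> 1 / (J k 1)\<^sup>2 + 1 / (J k' 1)\<^sup>2"
    using k(3) by (intro four_le_inverse_sq_add[OF nz]) simp
  then have "sqrt 4 \<le> sqrt (1 / (J k 1)\<^sup>2 + 1 / (J k' 1)\<^sup>2)"
    by (rule real_sqrt_le_mono)
  then show ?thesis
    unfolding ratio_row_dist_sq[OF K J Om k nz c] by simp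
qed

lemma comm_norm_pos:
  assumes "i \<in> {1..n}" "\<theta> i \<noteq> 0"
  shows "0 < comm_norm n \<theta> l (l i)"
proof -
  have "0 < (\<Sum>i'\<in>{1..n}. (if l i' = l i then \<theta> i' else 0)\<^sup>2)"
    using assms by (intro sum_pos2[OF _ assms(1)]) auto
  then show ?thesis
    unfolding comm_norm_def by simp
qed

lemma vnorm_pos:
  assumes "i \<in> {1..n}" "\<theta> i \<noteq> 0"
  shows "0 < vnorm n \<theta>"
proof -
  have "0 < (\<Sum>i'\<in>{1..n}. (\<theta> i')\<^sup>2)"
    using assms by (intro sum_pos2[OF _ assms(1)]) auto
  then show ?thesis
    unfolding vnorm_def by simp
qed

lemma Psi_pos:
  assumes "i \<in> {1..n}" "\<theta> i \<noteq> 0"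
  shows "0 < Psi n \<theta> l (l i)"
  using assms comm_norm_pos[of i n \<theta> l] vnorm_pos[of i n \<theta>] by (simp add: Psi_def)

lemma Psi_nonneg: "0 \<le> Psi n \<theta> l k"
  unfolding Psi_def comm_norm_def vnorm_def by (intro divide_nonneg_nonneg real_sqrt_ge_zero sum_nonneg) auto

lemma gram_nonneg:
  assumes "\<forall>t\<in>{1..p}. 0 \<le> A i t \<and> 0 \<le> A j t"
  shows "0 \<le> gram p A i j"
  using assms unfolding gram_def by (intro sum_nonneg) simp

lemma gram_diag_scaled_eq_0_imp:
  fixes E :: "nat \<Rightarrow> nat \<Rightarrow> real"
  assumes E: "\<forall>k\<in>{1..K}. \<forall>k'\<in>{1..K}. 0 \<le> E k k'"
    and d: "\<forall>k\<in>{1..K}. 0 < d k"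
    and ij: "i \<in> {1..K}" "j \<in> {1..K}"
    and zero: "gram K (\<lambda>k k'. d k * E k k' * d k') i j = 0"
  shows "gram K E i j = 0"
proof -
  have "0 \<le> (d i * E i t * d t) * (d j * E j t * d t)" if "t \<in> {1..K}" for t
    using E d ij that by (intro mult_nonneg_nonneg) (auto intro: less_imp_le)
  then have "\<forall>t\<in>{1..K}. (d i * E i t * d t) * (d j * E j t * d t) = 0"
    using zero unfolding gram_def by (subst sum_nonneg_eq_0_iff[symmetric]) auto
  moreover have "d i \<noteq> 0" "d j \<noteq> 0" "\<forall>t\<in>{1..K}. d t \<noteq> 0"
    using d d[rule_format, OF ij(1)] d[rule_format, OF ij(2)] by auto
  ultimately have "\<forall>t\<in>{1..K}. E i t * E j t = 0"
    by simp
  then show ?thesis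
    unfolding gram_def by (intro sum.neutral) blast
qed

lemma irreducible_mat_zero_pattern:
  assumes "irreducible_mat K A"
    and "\<forall>i\<in>{1..K}. \<forall>j\<in>{1..K}. B i j = 0 \<longrightarrow> A i j = 0"
  shows "irreducible_mat K B"
  using assms unfolding irreducible_mat_def by (meson Diff_iff subsetD)

lemma Sbar_nonneg:
  assumes E: "\<forall>k\<in>{1..K}. \<forall>k'\<in>{1..K}. 0 \<le> E k k'"
    and F: "\<forall>q\<in>{1..Q}. \<forall>k\<in>{1..K}. \<forall>k'\<in>{1..K'}. 0 \<le> F q k k'"
    and k: "k \<in> {1..K}" "k' \<in> {1..K}"
  shows "0 \<le> Sbar K K' Q n m \<theta> l \<delta> r E F k k'"
proof -
  have "0 \<le> gram K (S0 n \<theta> l E) k k'"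
    using E k by (intro gram_nonneg) (simp add: S0_def Psi_nonneg)
  moreover have "0 \<le> gram K' (Sq n \<theta> l m \<delta> r (F q)) k k'" if "q \<in> {1..Q}" for q
    using F k that by (intro gram_nonneg) (simp add: Sq_def Psi_nonneg)
  ultimately show ?thesis
    unfolding Sbar_def by (intro add_nonneg_nonneg mult_nonneg_nonneg sum_nonneg) auto
qed

lemma Sbar_eq_0_imp_gram_eq_0:
  assumes Psi: "\<forall>k\<in>{1..K}. 0 < Psi n \<theta> l k"
    and vnorm: "0 < vnorm n \<theta>" "0 < vnorm m \<delta>"
    and E: "\<forall>k\<in>{1..K}. \<forall>k'\<in>{1..K}. 0 \<le> E k k'"
    and F: "\<forall>q\<in>{1..Q}. \<forall>k\<in>{1..K}. \<forall>k'\<in>{1..K'}. 0 \<le> F q k k'"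
    and k: "k \<in> {1..K}" "k' \<in> {1..K}"
    and zero: "Sbar K K' Q n m \<theta> l \<delta> r E F k k' = 0"
  shows "gram K E k k' = 0"
proof -
  define \<alpha> where "\<alpha> = (vnorm n \<theta>)\<^sup>2 / (vnorm m \<delta>)\<^sup>2"
  have "0 < \<alpha>"
    using vnorm by (simp add: \<alpha>_def)
  moreover have "0 \<le> gram K (S0 n \<theta> l E) k k'"
    using E k by (intro gram_nonneg) (simp add: S0_def Psi_nonneg)
  moreover have "0 \<le> (\<Sum>q\<in>{1..Q}. gram K' (Sq n \<theta> l m \<delta> r (F q)) k k')"
    using F k by (intro sum_nonneg gram_nonneg) (simp add: Sq_def Psi_nonneg)
  ultimately have "\<alpha> * gram K (S0 n \<theta> l E) k k' = 0"
    using zero unfolding Sbar_def \<alpha>_def[symmetric]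
    by (metis add_nonneg_eq_0_iff less_imp_le mult_nonneg_nonneg)
  then have "gram K (\<lambda>k k'. Psi n \<theta> l k * E k k' * Psi n \<theta> l k') k k' = 0"
    using \<open>0 < \<alpha>\<close> by (simp add: S0_def[abs_def])
  then show ?thesis
    by (rule gram_diag_scaled_eq_0_imp[OF E Psi k])
qed

lemma Sbar_irreducible:
  assumes "\<forall>k\<in>{1..K}. 0 < Psi n \<theta> l k"
    and "0 < vnorm n \<theta>" "0 < vnorm m \<delta>"
    and "\<forall>k\<in>{1..K}. \<forall>k'\<in>{1..K}. 0 \<le> E k k'"
    and "\<forall>q\<in>{1..Q}. \<forall>k\<in>{1..K}. \<forall>k'\<in>{1..K'}. 0 \<le> F q k k'"
    and "irreducible_mat K (gram K E)"
  shows "irreducible_mat K (Sbar K K' Q n m \<theta> l \<delta> r E F)"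
  using Sbar_eq_0_imp_gram_eq_0[OF assms(1-5)] by (intro irreducible_mat_zero_pattern[OF assms(6)]) blast

lemma Theta_mat_mult:
  assumes "l i \<in> {1..K}"
  shows "(\<Sum>k\<in>{1..K}. Theta_mat n \<theta> l i k * J k j) = \<theta> i / comm_norm n \<theta> l (l i) * J (l i) j"
proof -
  have "(\<Sum>k\<in>{1..K}. Theta_mat n \<theta> l i k * J k j)
      = (\<Sum>k\<in>{1..K}. if k = l i then \<theta> i / comm_norm n \<theta> l (l i) * J (l i) j else 0)"
    unfolding Theta_mat_def by (intro sum.cong refl) auto
  also have "\<dots> = \<theta> i / comm_norm n \<theta> l (l i) * J (l i) j"
    using assms by simp
  finally show ?thesis .
qed

lemma Theta_mat_ratio_row:
  assumes "i \<in> {1..n}" "\<theta> i \<noteq> 0" "l i \<in> {1..K}"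
  shows "(\<Sum>t\<in>{1..K-1}. (\<Sum>k\<in>{1..K}. Theta_mat n \<theta> l i k * J k (t + 1)) * Om t j)
           / (c * (\<Sum>k\<in>{1..K}. Theta_mat n \<theta> l i k * J k 1))
         = ratio_row K J Om c (l i) j"
proof -
  define g where "g = \<theta> i / comm_norm n \<theta> l (l i)"
  have g: "g \<noteq> 0"
    using assms comm_norm_pos[of i n \<theta> l] by (simp add: g_def)
  have row: "(\<Sum>k\<in>{1..K}. Theta_mat n \<theta> l i k * J k j') = g * J (l i) j'" for j'
    unfolding g_def using assms(3) by (rule Theta_mat_mult)
  show ?thesis
    by (simp only: row ratio_row_scale[OF g])
qed

theorem lemma4:
  fixes K K' Q n m :: nat
    and l :: "nat \<Rightarrow> nat" and r :: "nat \<Rightarrow> nat"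
    and \<theta> \<delta> :: "nat \<Rightarrow> real"
    and E :: "nat \<Rightarrow> nat \<Rightarrow> real" and F :: "nat \<Rightarrow> nat \<Rightarrow> nat \<Rightarrow> real"
    and J Om :: "nat \<Rightarrow> nat \<Rightarrow> real" and \<sigma> :: "nat \<Rightarrow> real" and c :: real
  assumes K: "K \<ge> 2" and K': "K' \<ge> 1" and Q: "Q \<ge> 1"
    and l_range: "\<forall>i\<in>{1..n}. l i \<in> {1..K}" and l_onto: "\<forall>k\<in>{1..K}. \<exists>i\<in>{1..n}. l i = k"
    and r_range: "\<forall>j\<in>{1..m}. r j \<in> {1..K'}" and r_onto: "\<forall>k\<in>{1..K'}. \<exists>j\<in>{1..m}. r j = k"
    and \<theta>_range: "\<forall>i\<in>{1..n}. 0 < \<theta> i \<and> \<theta> i \<le> 1"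
    and \<delta>_range: "\<forall>j\<in>{1..m}. 0 < \<delta> j \<and> \<delta> j \<le> 1"
    and E_range: "\<forall>k\<in>{1..K}. \<forall>k'\<in>{1..K}. 0 \<le> E k k' \<and> E k k' \<le> 1"
    and E_sym: "\<forall>k\<in>{1..K}. \<forall>k'\<in>{1..K}. E k k' = E k' k"
    and F_range: "\<forall>q\<in>{1..Q}. \<forall>k\<in>{1..K}. \<forall>k'\<in>{1..K'}. 0 \<le> F q k k' \<and> F q k k' \<le> 1"
    and E_irr: "irreducible_mat K (gram K E)"
    and F_irr: "\<forall>q\<in>{1..Q}. irreducible_mat K (gram K' (F q))"
    and J_orth: "orthogonal_mat K J"
    and eig: "\<forall>k\<in>{1..K}. \<forall>k''\<in>{1..K}.
               Sbar K K' Q n m \<theta> l \<delta> r E F k k'' = (\<Sum>t\<in>{1..K}. J k t * \<sigma> t * J k'' t)"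
    and \<sigma>_decr: "\<forall>s\<in>{1..K}. \<forall>t\<in>{1..K}. s \<le> t \<longrightarrow> \<sigma> t \<le> \<sigma> s"
    and O_orth: "orthogonal_mat (K - 1) Om"
    and c: "c = 1 \<or> c = -1"
  defines "U \<equiv> \<lambda>i j. \<Sum>k\<in>{1..K}. Theta_mat n \<theta> l i k * J k j"
  defines "R \<equiv> \<lambda>i j. (\<Sum>t\<in>{1..K-1}. U i (t + 1) * Om t j) / (c * U i 1)"
  shows "\<forall>i1\<in>{1..n}. \<forall>i2\<in>{1..n}.
           (l i1 \<noteq> l i2 \<longrightarrow> sqrt (\<Sum>j\<in>{1..K-1}. (R i1 j - R i2 j)^2) \<ge> 2) \<and>
           (l i1 = l i2 \<longrightarrow> sqrt (\<Sum>j\<in>{1..K-1}. (R i1 j - R i2 j)^2) = 0)"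
proof -
  have K1: "1 \<le> K" and c2: "c\<^sup>2 = 1"
    using K c by auto
  have Psi: "\<forall>k\<in>{1..K}. 0 < Psi n \<theta> l k"
    using l_onto \<theta>_range Psi_pos[of _ n \<theta> l] by fastforce
  have vnorm: "0 < vnorm n \<theta>" "0 < vnorm m \<delta>"
    using l_onto[rule_format, of 1] r_onto[rule_format, of 1] K1 K' \<theta>_range \<delta>_range
      vnorm_pos[of _ n \<theta>] vnorm_pos[of _ m \<delta>] by fastforce+
  have E: "\<forall>k\<in>{1..K}. \<forall>k'\<in>{1..K}. 0 \<le> E k k'" and F: "\<forall>q\<in>{1..Q}. \<forall>k\<in>{1..K}. \<forall>k'\<in>{1..K'}. 0 \<le> F q k k'"
    using E_range F_range by auto
  have first_col_nz: "J k 1 \<noteq> 0" if "k \<in> {1..K}" for k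
    using spectral_first_column_nonzero[OF K1 J_orth eig _ Sbar_irreducible[OF Psi vnorm E F E_irr] _ that]
      Sbar_nonneg[OF E F] \<sigma>_decr K1 by simp
  have R_eq: "R i j = ratio_row K J Om c (l i) j" if i: "i \<in> {1..n}" for i j
    unfolding R_def U_def using \<theta>_range[rule_format, OF i] l_range i by (intro Theta_mat_ratio_row) auto
  show ?thesis
  proof (intro ballI conjI impI)
    fix i1 i2 assume i: "i1 \<in> {1..n}" "i2 \<in> {1..n}"
    show "sqrt (\<Sum>j\<in>{1..K-1}. (R i1 j - R i2 j)^2) = 0" if "l i1 = l i2"
      using that i R_eq by simp
    show "sqrt (\<Sum>j\<in>{1..K-1}. (R i1 j - R i2 j)^2) \<ge> 2" if "l i1 \<noteq> l i2"
      using ratio_row_dist_ge_two[OF K1 J_orth O_orth _ _ that first_col_nz first_col_nz c2] l_range i R_eq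
      by simp
  qed
qed

end
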